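(* There exists a simple undirected graph on $N$ nodes with adjacency matrix $\mathbf{A}\in\{0,1\}^{N\times N}$ such that for all $\mathbf{R}\in\mathbb{R}^{N\times 2}$ and $\mathbf{C}\in\mathbb{R}^{2\times N}$, it is not the case that $\operatorname{sign}(A_{ij})=\operatorname{sign}((\mathbf{R}\mathbf{C})_{ij})$ for all $i\neq j$.
   Context: $\operatorname{sign}:\mathbb{R}\to\{+,-\}$ takes the value $-$ on $(-\infty,0]$ and $+$ on $(0,\infty)$. Graphs have no self-loops and diagonal entries of adjacency matrices are ignored throughout. *)

theory Defs
  imports Main Complex_Main
begin

datatype pm = Plus | Minus

definition sign :: "real \<Rightarrow> pm" where
  "sign x = (if x > 0 then Plus else Minus)"

definition simple_adj :: "nat \<Rightarrow> (nat \<Rightarrow> nat \<Rightarrow> real) \<Rightarrow> bool" where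
  "simple_adj N A \<longleftrightarrow> (\<forall>i<N. \<forall>j<N. A i j \<in> {0,1} \<and> A i j = A j i) \<and> (\<forall>i<N. A i i = 0)"

end

theory Submission
  imports Defs
begin

(* The subdivided claw: centre 3, legs 3-0-4, 3-1-5, 3-2-6. If RC has rank at most 2, its rows
   0, 1, 2 satisfy a nontrivial linear relation a r0 + b r1 + c r2 = 0. But in the columns 3, 4, 5, 6
   these rows carry the sign patterns (+,+,+), (+,-,-), (-,+,-), (-,-,+), and no nonzero (a,b,c)
   is orthogonal to four vectors with these patterns: whatever the signs of a, b, c, one of the
   patterns agrees with them (up to a global sign) and gives a nonzero inner product. *)

lemma three_vectors_in_plane_dependent:
  fixes u1 u2 v1 v2 w1 w2 :: real
  obtains a b c where "(a, b, c) \<noteq> (0, 0, 0)"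
    and "a * u1 + b * v1 + c * w1 = 0" and "a * u2 + b * v2 + c * w2 = 0"
proof (cases "(v1*w2 - v2*w1, w1*u2 - w2*u1, u1*v2 - u2*v1) = (0, 0, 0)")
  case False
  \<comment> \<open>the cross product of (u1,v1,w1) and (u2,v2,w2)\<close>
  then show ?thesis
    by (intro that[of "v1*w2 - v2*w1" "w1*u2 - w2*u1" "u1*v2 - u2*v1"]) (auto simp: algebra_simps)
next
  case True
  then have minor: "u1 * v2 = u2 * v1" by simp
  consider "u1 = 0" "u2 = 0" | "u1 \<noteq> 0" | "u2 \<noteq> 0" by blast
  then show ?thesis
  proof cases
    case 1
    then show ?thesis by (intro that[of 1 0 0]) auto
  next
    case 2
    then show ?thesis by (intro that[of v1 "-u1" 0]) (auto simp: algebra_simps minor)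
  next
    case 3
    then show ?thesis by (intro that[of v2 "-u2" 0]) (auto simp: algebra_simps minor)
  qed
qed

lemma inner_pos_of_matching_sign_pattern:
  fixes p q r s t u :: real
  assumes "p > 0" "s > 0" "q \<le> 0" "t \<le> 0" "r \<le> 0" "u \<le> 0"
  shows "p * s + q * t + r * u > 0"
  using assms by (simp add: add_pos_nonneg mult_nonpos_nonpos)

lemma nonneg_orthogonal_to_pos_eq_zero:
  fixes p q r s t u :: real
  assumes "p \<ge> 0" "q \<ge> 0" "r \<ge> 0" "s > 0" "t > 0" "u > 0"
    and "p * s + q * t + r * u = 0"
  shows "p = 0 \<and> q = 0 \<and> r = 0"
proof -
  have "p * s \<ge> 0" "q * t \<ge> 0" "r * u \<ge> 0"
    using assms by simp_all
  then have "p * s = 0" "q * t = 0" "r * u = 0"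
    using assms(7) by linarith+
  then show ?thesis
    using assms(4-6) by simp
qed

lemma orthogonal_to_claw_sign_patterns_eq_zero:
  fixes a b c x0 x1 x2 y0 y1 y2 z0 z1 z2 w0 w1 w2 :: real
  assumes x: "a*x0 + b*x1 + c*x2 = 0" "x0 > 0" "x1 > 0" "x2 > 0"
    and y: "a*y0 + b*y1 + c*y2 = 0" "y0 > 0" "y1 \<le> 0" "y2 \<le> 0"
    and z: "a*z0 + b*z1 + c*z2 = 0" "z1 > 0" "z0 \<le> 0" "z2 \<le> 0"
    and w: "a*w0 + b*w1 + c*w2 = 0" "w2 > 0" "w0 \<le> 0" "w1 \<le> 0"
  shows "(a, b, c) = (0, 0, 0)"
proof -
  consider "a \<ge> 0" "b \<ge> 0" "c \<ge> 0" | "a \<le> 0" "b \<le> 0" "c \<le> 0"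
    | "a > 0" "b \<le> 0" "c \<le> 0" | "b > 0" "a \<le> 0" "c \<le> 0" | "c > 0" "a \<le> 0" "b \<le> 0"
    | "a < 0" "b \<ge> 0" "c \<ge> 0" | "b < 0" "a \<ge> 0" "c \<ge> 0" | "c < 0" "a \<ge> 0" "b \<ge> 0"
    by linarith
  then show ?thesis
  proof cases
    case 1
    then show ?thesis using nonneg_orthogonal_to_pos_eq_zero[of a b c x0 x1 x2] x by simp
  next
    case 2
    then show ?thesis using nonneg_orthogonal_to_pos_eq_zero[of "-a" "-b" "-c" x0 x1 x2] x by simp
  next
    case 3
    then show ?thesis using inner_pos_of_matching_sign_pattern[of a y0 b y1 c y2] y by simp
  next
    case 4
    then show ?thesis using inner_pos_of_matching_sign_pattern[of b z1 a z0 c z2] z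
      by (simp add: algebra_simps)
  next
    case 5
    then show ?thesis using inner_pos_of_matching_sign_pattern[of c w2 a w0 b w1] w
      by (simp add: algebra_simps)
  next
    case 6
    then show ?thesis using inner_pos_of_matching_sign_pattern[of "-a" y0 "-b" y1 "-c" y2] y
      by simp
  next
    case 7
    then show ?thesis using inner_pos_of_matching_sign_pattern[of "-b" z1 "-a" z0 "-c" z2] z
      by (simp add: algebra_simps)
  next
    case 8
    then show ?thesis using inner_pos_of_matching_sign_pattern[of "-c" w2 "-a" w0 "-b" w1] w
      by (simp add: algebra_simps)
  qed
qed

definition subdivided_claw :: "nat \<Rightarrow> nat \<Rightarrow> real" where
  "subdivided_claw i j =
    (if {i, j} \<in> {{0, 3}, {1, 3}, {2, 3}, {0, 4}, {1, 5}, {2, 6}} then 1 else 0)"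

lemma simple_adj_subdivided_claw: "simple_adj 7 subdivided_claw"
  unfolding simple_adj_def subdivided_claw_def by (auto simp: insert_commute)

lemma subdivided_claw_not_sign_rank_2:
  fixes R C :: "nat \<Rightarrow> nat \<Rightarrow> real"
  shows "\<not> (\<forall>i<7. \<forall>j<7. i \<noteq> j \<longrightarrow> sign (subdivided_claw i j) = sign (\<Sum>k<2. R i k * C k j))"
proof
  assume signs: "\<forall>i<7. \<forall>j<7. i \<noteq> j \<longrightarrow> sign (subdivided_claw i j) = sign (\<Sum>k<2. R i k * C k j)"
  define P where "P i j = R i 0 * C 0 j + R i 1 * C 1 j" for i j
  have sign_P: "sign (P i j) = sign (subdivided_claw i j)" if "i < 7" "j < 7" "i \<noteq> j" for i j
    using signs that by (simp add: P_def numeral_eq_Suc)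
  have edge: "P i j > 0" if "i < 7" "j < 7" "i \<noteq> j" "subdivided_claw i j = 1" for i j
    using sign_P[OF that(1-3)] that(4) by (simp add: sign_def split: if_splits)
  have non_edge: "P i j \<le> 0" if "i < 7" "j < 7" "i \<noteq> j" "subdivided_claw i j = 0" for i j
    using sign_P[OF that(1-3)] that(4) by (simp add: sign_def split: if_splits)
  obtain a b c where nonzero: "(a, b, c) \<noteq> (0, 0, 0)"
    and rel: "a * R 0 0 + b * R 1 0 + c * R 2 0 = 0" "a * R 0 1 + b * R 1 1 + c * R 2 1 = 0"
    by (rule three_vectors_in_plane_dependent)
  have rows_dependent: "a * P 0 j + b * P 1 j + c * P 2 j = 0" for j
  proof -
    have "a * P 0 j + b * P 1 j + c * P 2 j
        = (a * R 0 0 + b * R 1 0 + c * R 2 0) * C 0 j + (a * R 0 1 + b * R 1 1 + c * R 2 1) * C 1 j"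
      by (simp add: P_def algebra_simps)
    then show ?thesis using rel by simp
  qed
  have "(a, b, c) = (0, 0, 0)"
    by (rule orthogonal_to_claw_sign_patterns_eq_zero[OF rows_dependent[of 3] _ _ _
          rows_dependent[of 4] _ _ _ rows_dependent[of 5] _ _ _ rows_dependent[of 6]])
      (auto intro!: edge non_edge simp: subdivided_claw_def doubleton_eq_iff)
  with nonzero show False ..
qed

theorem theorem1:
  shows "\<exists>N::nat. \<exists>A::nat \<Rightarrow> nat \<Rightarrow> real. simple_adj N A \<and>
     (\<forall>(R::nat \<Rightarrow> nat \<Rightarrow> real) (C::nat \<Rightarrow> nat \<Rightarrow> real).
        \<not> (\<forall>i<N. \<forall>j<N. i \<noteq> j \<longrightarrow> sign (A i j) = sign (\<Sum>k<2. R i k * C k j)))"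
  using simple_adj_subdivided_claw subdivided_claw_not_sign_rank_2 by blast

end
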